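(* Let $m\ge1$ and let $Q=(q_{ij})_{0\le i,j\le m}$ be the matrix with $q_{00}=\alpha_{00}-\alpha_0-\sum_{j=1}^m\beta_{0j}$; $q_{i0}=\alpha_{0i}+2\beta_{0i}$ and $q_{0i}=\alpha_{i0}$ for $1\le i\le m$; $q_{ij}=\alpha_{ji}$ for $1\le i\ne j\le m$; $q_{ii}=\alpha_{ii}-\alpha_i-\sum_{j\in\{0,\dots,m\},j\ne i}\alpha_{ij}$ for $1\le i\le m$, where all $\alpha$'s and $\beta$'s are nonnegative. If the Perron–Frobenius eigenvalue $\lambda_1$ of $Q$ (the real eigenvalue with $\operatorname{Re}\lambda<\lambda_1$ for all other eigenvalues $\lambda$) is algebraically simple and $u$ is the corresponding nonnegative right eigenvector with $e^Tu=1$, then every solution of $dx/dt=Qx-x(e^TQx)$ on the simplex $\{x\ge 0,\ e^Tx=1\}$ whose initial condition has nonzero coefficient on $u$ in the decomposition of $\mathbb{R}^{m+1}$ into generalized eigenspaces of $Q$ converges to $u$; in particular this frequency equation has one and only one stable fixed point and no stable limit cycle.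
   Context: $e=(1,\dots,1)^T$. $Q$ is the linear-mean-dynamics matrix of the multi-phenotype cancer model (CSC index 0, $\mathrm{NSCC}_1,\dots,\mathrm{NSCC}_m$) extended by symmetric differentiation CSC $\to\mathrm{NSCC}_j+\mathrm{NSCC}_j$ at rate $\beta_{0j}$. *)

theory Defs
  imports Complex_Main "Jordan_Normal_Form.Jordan_Normal_Form"
begin

text \<open>Indices 0..m: index 0 is the CSC, indices 1..m are NSCC_1..NSCC_m.
  alpha i j = alpha_{ij}, alphad i = alpha_i, beta j = beta_{0j}.\<close>

definition Q_entry :: "nat \<Rightarrow> (nat \<Rightarrow> nat \<Rightarrow> real) \<Rightarrow> (nat \<Rightarrow> real) \<Rightarrow> (nat \<Rightarrow> real)
    \<Rightarrow> nat \<Rightarrow> nat \<Rightarrow> real" where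
  "Q_entry m alpha alphad beta i j =
     (if i = 0 \<and> j = 0 then alpha 0 0 - alphad 0 - (\<Sum>k=1..m. beta k)
      else if j = 0 then alpha 0 i + 2 * beta i
      else if i = 0 then alpha j 0
      else if i \<noteq> j then alpha j i
      else alpha i i - alphad i - (\<Sum>k\<in>{0..m} - {i}. alpha i k))"

definition Q_mat :: "nat \<Rightarrow> (nat \<Rightarrow> nat \<Rightarrow> real) \<Rightarrow> (nat \<Rightarrow> real) \<Rightarrow> (nat \<Rightarrow> real) \<Rightarrow> real mat" where
  "Q_mat m alpha alphad beta = mat (m+1) (m+1) (\<lambda>(i,j). Q_entry m alpha alphad beta i j)"

definition gen_eigenspace :: "complex mat \<Rightarrow> complex \<Rightarrow> complex vec set" where
  "gen_eigenspace A lam = {v \<in> carrier_vec (dim_row A).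
     (char_matrix A lam ^\<^sub>m dim_row A) *\<^sub>v v = 0\<^sub>v (dim_row A)}"

text \<open>Component of x0 on the generalized eigenspace of lam is nonzero, i.e. in every
  decomposition of x0 as sum over the eigenvalues of vectors in the respective generalized
  eigenspaces (which is unique), the lam-summand is nonzero.\<close>
definition nonzero_gen_component :: "complex mat \<Rightarrow> complex \<Rightarrow> complex vec \<Rightarrow> bool" where
  "nonzero_gen_component A lam x0 =
     (\<forall>w :: complex \<Rightarrow> complex vec.
        (\<forall>mu\<in>Collect (eigenvalue A). w mu \<in> gen_eigenspace A mu) \<and>
        (\<forall>i < dim_row A. (\<Sum>mu\<in>Collect (eigenvalue A). w mu $ i) = x0 $ i)
        \<longrightarrow> w lam \<noteq> 0\<^sub>v (dim_row A))"

end

theory Submission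
  imports Defs
    "Jordan_Normal_Form.Jordan_Normal_Form_Existence"
    "Jordan_Normal_Form.Jordan_Normal_Form_Uniqueness"
    "HOL-Real_Asymp.Real_Asymp"
begin

(* In a Jordan basis Q = P J P^-1 the coordinates y = P^-1 x of a solution satisfy
   y' = (J - phi) y, where phi = e^T Q x is the only nonlinear term. Dividing by the
   coordinate y_p of the simple eigenvalue lam1 removes phi: the ratios y_r / y_p solve
   the linear system with matrix J - lam1, which off p is bidiagonal with diagonal of
   negative real part, so they tend to 0 by back substitution along the Jordan chains.
   The hypothesis on the initial condition says y_p(0) ~= 0, and y_p never vanishes as it
   solves a scalar linear equation. Hence x(t) is asymptotically a multiple of the p-th
   column of P, that is of u, and e^T x = 1 fixes the multiple. *)

hide_const (open) Coset.order

lemma has_real_derivative_cmod_square: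
  fixes y :: "real \<Rightarrow> complex"
  assumes "(y has_vector_derivative y') (at t within S)"
  shows "((\<lambda>t. (cmod (y t))\<^sup>2) has_real_derivative 2 * Re (y' * cnj (y t))) (at t within S)"
proof -
  have eq: "(\<lambda>t. (cmod (y t))\<^sup>2) = (\<lambda>t. Re (y t * cnj (y t)))"
    by (rule ext) (simp add: complex_mult_cnj cmod_def)
  have "((\<lambda>t. y t * cnj (y t)) has_vector_derivative y t * cnj y' + y' * cnj (y t)) (at t within S)"
    by (intro has_vector_derivative_mult has_vector_derivative_cnj assms)
  from bounded_linear.has_vector_derivative[OF bounded_linear_Re this]
  have "((\<lambda>t. Re (y t * cnj (y t))) has_vector_derivative Re (y t * cnj y' + y' * cnj (y t)))
          (at t within S)" .
  moreover have "Re (y t * cnj y' + y' * cnj (y t)) = 2 * Re (y' * cnj (y t))"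
    by (simp add: algebra_simps)
  ultimately show ?thesis
    unfolding eq has_real_derivative_iff_has_vector_derivative by simp
qed

lemma increasing_if_deriv_nonneg_within:
  fixes W W' :: "real \<Rightarrow> real"
  assumes "a \<le> b"
    and deriv: "\<And>s. a \<le> s \<Longrightarrow> s \<le> b \<Longrightarrow> (W has_real_derivative W' s) (at s within {a..})"
    and nonneg: "\<And>s. a \<le> s \<Longrightarrow> s \<le> b \<Longrightarrow> W' s \<ge> 0"
  shows "W a \<le> W b"
proof (rule DERIV_nonneg_imp_increasing_open[OF \<open>a \<le> b\<close>])
  fix s assume s: "a < s" "s < b"
  have "at s within {a..} = at s"
    by (rule at_within_open_subset[of s "{a<..}"]) (use s in auto)
  then show "\<exists>y. (W has_real_derivative y) (at s) \<and> y \<ge> 0"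
    using deriv[of s] nonneg[of s] s by auto
next
  show "continuous_on {a..b} W"
    unfolding continuous_on_eq_continuous_within
  proof
    fix s assume "s \<in> {a..b}"
    then have "(W has_real_derivative W' s) (at s within {a..b})"
      by (intro has_field_derivative_subset[OF deriv]) auto
    then show "continuous (at s within {a..b}) W"
      by (rule DERIV_continuous)
  qed
qed

text \<open>\<open>\<bar>y\<bar>\<^sup>2 e\<^sup>2\<^sup>K\<^sup>t\<close> is nondecreasing.\<close>

lemma linear_ode_nonvanishing:
  fixes y g :: "real \<Rightarrow> complex"
  assumes ode: "\<And>t. t \<ge> 0 \<Longrightarrow> (y has_vector_derivative g t * y t) (at t within {0..})"
    and bound: "\<And>t. t \<ge> 0 \<Longrightarrow> Re (g t) \<ge> - K"
    and "y 0 \<noteq> 0" and "t \<ge> 0"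
  shows "y t \<noteq> 0"
proof -
  define V where "V = (\<lambda>s. (cmod (y s))\<^sup>2)"
  define W where "W s = V s * exp (2 * K * s)" for s
  have dV: "(V has_real_derivative 2 * Re (g s) * V s) (at s within {0..})" if "s \<ge> 0" for s
  proof -
    have "y s * cnj (y s) = of_real (V s)"
      by (simp only: V_def complex_norm_square)
    then have "2 * Re (g s * y s * cnj (y s)) = 2 * Re (g s) * V s"
      by (simp add: mult.assoc)
    from has_real_derivative_cmod_square[OF ode[OF that], unfolded this, folded V_def]
    show ?thesis .
  qed
  have dW: "(W has_real_derivative 2 * (Re (g s) + K) * V s * exp (2 * K * s)) (at s within {0..})"
    if "s \<ge> 0" for s
    unfolding W_def
    by (rule derivative_eq_intros dV[OF that] refl | simp)+ (simp add: algebra_simps)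
  have "W 0 \<le> W t"
  proof (rule increasing_if_deriv_nonneg_within[OF \<open>t \<ge> 0\<close>])
    fix s :: real assume "0 \<le> s"
    then show "(W has_real_derivative 2 * (Re (g s) + K) * V s * exp (2 * K * s)) (at s within {0..})"
      and "2 * (Re (g s) + K) * V s * exp (2 * K * s) \<ge> 0"
      using dW bound[of s] by (auto simp: V_def)
  qed
  moreover have "W 0 > 0"
    using \<open>y 0 \<noteq> 0\<close> by (simp add: W_def V_def)
  ultimately show ?thesis
    by (auto simp: W_def V_def)
qed

lemma Re_affine_mult_cnj_le:
  fixes a q f :: complex
  shows "Re ((a * q + f) * cnj q) \<le> Re a * (cmod q)\<^sup>2 + cmod f * cmod q"
proof -
  have "Re (a * q * cnj q) = Re a * (cmod q)\<^sup>2"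
    unfolding cmod_power2 by (simp add: algebra_simps power2_eq_square)
  moreover have "Re (f * cnj q) \<le> cmod f * cmod q"
    using complex_Re_le_cmod[of "f * cnj q"] by (simp add: norm_mult)
  ultimately show ?thesis
    by (simp add: distrib_right)
qed

text \<open>With \<open>c = -Re a\<close>, the function \<open>((\<eta>/c)\<^sup>2 - \<bar>q\<bar>\<^sup>2) e\<^sup>c\<^sup>t\<close> is nondecreasing.\<close>

lemma forced_linear_ode_cmod_square_bound:
  fixes q f :: "real \<Rightarrow> complex"
  assumes "Re a < 0"
    and ode: "\<And>t. t \<ge> T \<Longrightarrow> (q has_vector_derivative a * q t + f t) (at t)"
    and small: "\<And>t. t \<ge> T \<Longrightarrow> cmod (f t) \<le> \<eta>"
    and "t \<ge> T"
  shows "(cmod (q t))\<^sup>2 \<le> (\<eta> / Re a)\<^sup>2 + (cmod (q T))\<^sup>2 * exp (Re a * (t - T))"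
proof -
  define c where "c = - Re a"
  have "c > 0"
    using \<open>Re a < 0\<close> by (simp add: c_def)
  define R where "R = (\<eta> / c)\<^sup>2"
  define V where "V = (\<lambda>t. (cmod (q t))\<^sup>2)"
  define V' where "V' s = 2 * Re ((a * q s + f s) * cnj (q s))" for s
  define U where "U = (\<lambda>t. (R - V t) * exp (c * t))"
  have dU: "(U has_real_derivative (c * (R - V s) - V' s) * exp (c * s)) (at s within {T..})"
    if "s \<ge> T" for s
  proof -
    have dV: "(V has_real_derivative V' s) (at s)"
      unfolding V_def V'_def by (rule has_real_derivative_cmod_square[OF ode[OF that]])
    have "(U has_real_derivative (c * (R - V s) - V' s) * exp (c * s)) (at s)"
      unfolding U_def by (rule derivative_eq_intros dV refl | simp)+ (simp add: algebra_simps)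
    then show ?thesis
      by (rule has_field_derivative_at_within)
  qed
  have U'_nonneg: "c * (R - V s) - V' s \<ge> 0" if "s \<ge> T" for s
  proof -
    define r where "r = cmod (q s)"
    have "cmod (f s) * r \<le> \<eta> * r"
      using small[OF that] by (simp add: mult_right_mono r_def)
    then have "V' s \<le> 2 * (\<eta> * r) - 2 * (c * r\<^sup>2)"
      using Re_affine_mult_cnj_le[of a "q s" "f s"] by (simp add: V'_def c_def r_def)
    moreover have "c * R + c * r\<^sup>2 - 2 * (\<eta> * r) = c * (r - \<eta> / c)\<^sup>2"
      using \<open>c > 0\<close> by (simp add: R_def power2_eq_square field_simps)
    moreover have "c * (R - V s) = c * R - c * r\<^sup>2"
      by (simp add: V_def r_def right_diff_distrib)
    moreover have "c * (r - \<eta> / c)\<^sup>2 \<ge> 0"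
      using \<open>c > 0\<close> by simp
    ultimately show ?thesis
      by linarith
  qed
  have "U T \<le> U t"
  proof (rule increasing_if_deriv_nonneg_within[OF \<open>t \<ge> T\<close>])
    fix s assume "T \<le> s"
    then show "(U has_real_derivative (c * (R - V s) - V' s) * exp (c * s)) (at s within {T..})"
      and "(c * (R - V s) - V' s) * exp (c * s) \<ge> 0"
      using dU U'_nonneg by simp_all
  qed
  then have "(R - V T) * exp (c * T) / exp (c * t) \<le> R - V t"
    by (simp add: U_def divide_le_eq)
  moreover have "(R - V T) * exp (c * T) / exp (c * t) = (R - V T) * exp (Re a * (t - T))"
    unfolding times_divide_eq_right[symmetric] exp_diff[symmetric] c_def by (simp add: algebra_simps)
  moreover have "(R - V T) * exp (Re a * (t - T)) \<ge> - V T * exp (Re a * (t - T))"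
    by (intro mult_right_mono) (auto simp: R_def)
  moreover have "R = (\<eta> / Re a)\<^sup>2"
    by (simp add: R_def c_def power2_eq_square)
  ultimately show ?thesis
    unfolding V_def by linarith
qed

lemma forced_linear_ode_tendsto_zero:
  fixes q f :: "real \<Rightarrow> complex"
  assumes "Re a < 0"
    and ode: "\<And>t. t > T \<Longrightarrow> (q has_vector_derivative a * q t + f t) (at t)"
    and "(f \<longlongrightarrow> 0) at_top"
  shows "(q \<longlongrightarrow> 0) at_top"
proof (rule tendstoI)
  fix e :: real assume "e > 0"
  define \<eta> where "\<eta> = - Re a * e / 2"
  have "\<eta> > 0"
    using \<open>Re a < 0\<close> \<open>e > 0\<close> by (simp add: \<eta>_def mult_neg_pos)
  from tendstoD[OF \<open>(f \<longlongrightarrow> 0) at_top\<close> this]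
  obtain N where N: "\<And>t. t \<ge> N \<Longrightarrow> cmod (f t) < \<eta>"
    by (auto simp: eventually_at_top_linorder)
  define T1 where "T1 = max N (T + 1)"
  have "(\<eta> / Re a)\<^sup>2 = e\<^sup>2 / 4"
    using \<open>Re a < 0\<close> by (simp add: \<eta>_def power_divide power_mult_distrib)
  with forced_linear_ode_cmod_square_bound[of a T1 q f \<eta>] \<open>Re a < 0\<close> ode N
  have bound: "(cmod (q t))\<^sup>2 \<le> e\<^sup>2 / 4 + (cmod (q T1))\<^sup>2 * exp (Re a * (t - T1))"
    if "t \<ge> T1" for t
    using that by (auto simp: T1_def less_imp_le)
  have "((\<lambda>t. (cmod (q T1))\<^sup>2 * exp (Re a * (t - T1))) \<longlongrightarrow> 0) at_top"
    using \<open>Re a < 0\<close> by real_asymp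
  then have "eventually (\<lambda>t. (cmod (q T1))\<^sup>2 * exp (Re a * (t - T1)) < e\<^sup>2 / 2) at_top"
    by (rule order_tendstoD) (use \<open>e > 0\<close> in simp)
  moreover have "eventually (\<lambda>t. t \<ge> T1) at_top"
    by simp
  ultimately show "eventually (\<lambda>t. dist (q t) 0 < e) at_top"
  proof eventually_elim
    case (elim t)
    have "e\<^sup>2 > 0"
      using \<open>e > 0\<close> by simp
    with bound[OF elim(2)] elim(1) have "(cmod (q t))\<^sup>2 < e\<^sup>2"
      by linarith
    then show ?case
      using \<open>e > 0\<close> by (simp add: power_less_imp_less_base)
  qed
qed

lemma has_vector_derivative_quotient:
  fixes a b :: "real \<Rightarrow> 'a::real_normed_field"
  assumes "(a has_vector_derivative a') (at t within S)"
    and "(b has_vector_derivative b') (at t within S)"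
    and "b t \<noteq> 0"
  shows "((\<lambda>s. a s / b s) has_vector_derivative (a' * b t - a t * b') / (b t)\<^sup>2) (at t within S)"
  using has_derivative_divide'[OF assms[unfolded has_vector_derivative_def]]
  unfolding has_vector_derivative_def
  by (rule has_derivative_eq_rhs)
    (use assms(3) in \<open>auto simp: fun_eq_iff scaleR_conv_of_real field_simps power2_eq_square\<close>)

lemma tendsto_normalized_perturbation:
  fixes X s :: "real \<Rightarrow> nat \<Rightarrow> 'a::real_normed_field"
  assumes shape: "eventually (\<lambda>t. \<forall>i<n. X t i = c t * (w i + s t i)) at_top"
    and normalized: "eventually (\<lambda>t. (\<Sum>i<n. X t i) = 1) at_top"
    and small: "\<And>i. i < n \<Longrightarrow> ((\<lambda>t. s t i) \<longlongrightarrow> 0) at_top"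
    and "(\<Sum>i<n. w i) = 1" and "i < n"
  shows "((\<lambda>t. X t i) \<longlongrightarrow> w i) at_top"
proof -
  have "((\<lambda>t. (w i + s t i) / ((\<Sum>j<n. w j) + (\<Sum>j<n. s t j)))
      \<longlongrightarrow> (w i + 0) / ((\<Sum>j<n. w j) + 0)) at_top"
    by (intro tendsto_intros tendsto_null_sum small) (use assms(4,5) in auto)
  then have "((\<lambda>t. (w i + s t i) / (\<Sum>j<n. w j + s t j)) \<longlongrightarrow> w i) at_top"
    by (simp add: sum.distrib assms(4))
  moreover from shape normalized
  have "eventually (\<lambda>t. (w i + s t i) / (\<Sum>j<n. w j + s t j) = X t i) at_top"
  proof eventually_elim
    case (elim t)
    have "(\<Sum>j<n. X t j) = (\<Sum>j<n. c t * (w j + s t j))"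
      using elim(1) by (intro sum.cong) auto
    also have "\<dots> = c t * (\<Sum>j<n. w j + s t j)"
      by (rule sum_distrib_left[symmetric])
    finally have "c t * (\<Sum>j<n. w j + s t j) = 1"
      using elim(2) by simp
    then have "c t = 1 / (\<Sum>j<n. w j + s t j)"
      by (metis eq_divide_eq mult_zero_right zero_neq_one)
    with elim(1) \<open>i < n\<close> show ?case
      by simp
  qed
  ultimately show ?thesis
    by (simp add: tendsto_cong)
qed

lemma has_vector_derivative_mult_mat_vec:
  fixes M :: "'a::real_normed_algebra mat"
  assumes "M \<in> carrier_mat k n" "\<And>s. X s \<in> carrier_vec n" "D \<in> carrier_vec n"
    and "\<And>j. j < n \<Longrightarrow> ((\<lambda>s. X s $ j) has_vector_derivative D $ j) F"
    and "r < k"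
  shows "((\<lambda>s. (M *\<^sub>v X s) $ r) has_vector_derivative (M *\<^sub>v D) $ r) F"
  using assms
  by (simp add: scalar_prod_def carrier_vecD[OF assms(2)])
    (intro has_vector_derivative_sum has_vector_derivative_mult_right; simp)

lemma order_prod_linear_factors:
  fixes a :: "'a::idom"
  shows "order a (\<Prod>b\<leftarrow>bs. [:-b, 1:]) = length (filter ((=) a) bs)"
proof (induct bs)
  case (Cons b bs)
  have "(\<Prod>b\<leftarrow>bs. [:-b, 1:]) \<noteq> (0 :: 'a poly)"
    by (auto simp: prod_list_zero_iff)
  then have "[:-b, 1:] * (\<Prod>b\<leftarrow>bs. [:-b, 1:]) \<noteq> 0"
    by (metis mult_eq_0_iff pCons_eq_0_iff one_neq_zero)
  moreover have "order a [:-b, 1:] = (if a = b then 1 else 0)"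
    using order_power_n_n[of a 1] by (auto intro: order_0I)
  ultimately show ?case
    using order_mult[of "[:-b, 1:]" "\<Prod>b\<leftarrow>bs. [:-b, 1:]" a] Cons by simp
qed (simp add: order_0I)

lemma jordan_matrix_bidiagonal:
  assumes "i < sum_list (map fst n_as)" "j < sum_list (map fst n_as)"
    and "jordan_matrix n_as $$ (i, j) \<noteq> 0"
  shows "j = i \<or> j = Suc i \<and> jordan_matrix n_as $$ (i, i) = jordan_matrix n_as $$ (j, j)"
  using assms
proof (induct n_as arbitrary: i j)
  case (Cons ka n_as)
  obtain k a where ka: "ka = (k, a)" by force
  let ?N = "sum_list (map fst n_as)"
  have entry: "jordan_matrix (ka # n_as) $$ (i', j') =
      (if i' < k then if j' < k then jordan_block k a $$ (i', j') else 0
       else if j' < k then 0 else jordan_matrix n_as $$ (i' - k, j' - k))"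
    if "i' < k + ?N" "j' < k + ?N" for i' j'
    unfolding ka jordan_matrix_Cons using that by (subst index_mat_four_block) auto
  have i: "i < k + ?N" and j: "j < k + ?N"
    using Cons.prems ka by auto
  show ?case
  proof (cases "i < k")
    case True
    with Cons.prems(3) entry[OF i j] entry[OF i i] entry[OF j j] show ?thesis
      by (auto split: if_splits)
  next
    case False
    with Cons.prems(3) entry[OF i j] have "\<not> j < k"
      by (auto split: if_splits)
    with False Cons.prems(3) entry[OF i j] have "jordan_matrix n_as $$ (i - k, j - k) \<noteq> 0"
      by simp
    with Cons.hyps[of "i - k" "j - k"] False \<open>\<not> j < k\<close> i j
    have "j - k = i - k \<or> j - k = Suc (i - k) \<and>
        jordan_matrix n_as $$ (i - k, i - k) = jordan_matrix n_as $$ (j - k, j - k)"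
      by auto
    with False \<open>\<not> j < k\<close> entry[OF i i] entry[OF j j] show ?thesis
      by auto
  qed
qed simp

locale jordan_frame =
  fixes A :: "complex mat" and n :: nat and n_as :: "(nat \<times> complex) list"
    and P Pinv :: "complex mat"
  assumes A_carrier: "A \<in> carrier_mat n n"
    and similar: "similar_mat_wit A (jordan_matrix n_as) P Pinv"
begin

abbreviation J :: "complex mat" where
  "J \<equiv> jordan_matrix n_as"

definition jdiag :: "nat \<Rightarrow> complex" where
  "jdiag r = J $$ (r, r)"

text \<open>Set to \<open>0\<close> in the last row, so that \<open>(J y)\<^sub>r = jdiag r * y\<^sub>r + jsup r * y\<^sub>r\<^sub>+\<^sub>1\<close>
  holds in every row (the junk entry \<open>y\<^sub>n\<close> is multiplied by \<open>0\<close>).\<close>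

definition jsup :: "nat \<Rightarrow> complex" where
  "jsup r = (if Suc r < n then J $$ (r, Suc r) else 0)"

lemma carriers: "J \<in> carrier_mat n n" "P \<in> carrier_mat n n" "Pinv \<in> carrier_mat n n"
  and P_Pinv: "P * Pinv = 1\<^sub>m n" and Pinv_P: "Pinv * P = 1\<^sub>m n" and A_eq: "A = P * J * Pinv"
  using similar_mat_witD2[OF A_carrier similar] by auto

lemma dim_J [simp]: "sum_list (map fst n_as) = n"
  using carriers(1) by (metis carrier_matD(1) jordan_matrix_dim(1))

lemma Pinv_P_mult_vec: "v \<in> carrier_vec n \<Longrightarrow> Pinv *\<^sub>v (P *\<^sub>v v) = v"
  using carriers Pinv_P by (metis assoc_mult_mat_vec one_mult_mat_vec)

lemma P_Pinv_mult_vec: "v \<in> carrier_vec n \<Longrightarrow> P *\<^sub>v (Pinv *\<^sub>v v) = v"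
  using carriers P_Pinv by (metis assoc_mult_mat_vec one_mult_mat_vec)

lemma Pinv_A_mult_vec:
  assumes "v \<in> carrier_vec n"
  shows "Pinv *\<^sub>v (A *\<^sub>v v) = J *\<^sub>v (Pinv *\<^sub>v v)"
proof -
  have "A *\<^sub>v v = P *\<^sub>v (J *\<^sub>v (Pinv *\<^sub>v v))"
    unfolding A_eq using assoc_mult_mat_vec[of "P * J" n n Pinv n] assoc_mult_mat_vec[of P n n J n]
      carriers assms by simp
  then show ?thesis
    using carriers assms by (simp add: Pinv_P_mult_vec)
qed

lemma J_entry_nonzero:
  assumes "i < n" "j < n" "J $$ (i, j) \<noteq> 0"
  shows "j = i \<or> j = Suc i \<and> jdiag i = jdiag j"
  using jordan_matrix_bidiagonal[of i n_as j] assms by (simp add: jdiag_def)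

lemma jsup_nonzero: "jsup r \<noteq> 0 \<Longrightarrow> Suc r < n \<and> jdiag (Suc r) = jdiag r"
  using J_entry_nonzero[of r "Suc r"] by (auto simp: jsup_def split: if_splits)

lemma J_mult_vec_nth:
  assumes "y \<in> carrier_vec n" "r < n"
  shows "(J *\<^sub>v y) $ r = jdiag r * y $ r + jsup r * y $ Suc r"
proof -
  have "(J *\<^sub>v y) $ r = (\<Sum>s<n. J $$ (r, s) * y $ s)"
    using carriers(1) assms by (simp add: scalar_prod_def atLeast0LessThan)
  also have "\<dots> = (\<Sum>s<n. (if s = r then jdiag r * y $ r else 0)
      + (if s = Suc r then jsup r * y $ Suc r else 0))"
  proof (rule sum.cong)
    fix s assume "s \<in> {..<n}"
    then show "J $$ (r, s) * y $ s = (if s = r then jdiag r * y $ r else 0)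
        + (if s = Suc r then jsup r * y $ Suc r else 0)"
      using J_entry_nonzero[OF \<open>r < n\<close>, of s] by (auto simp: jdiag_def jsup_def)
  qed simp
  also have "\<dots> = jdiag r * y $ r + jsup r * y $ Suc r"
    using assms(2) by (simp add: sum.distrib jsup_def)
  finally show ?thesis .
qed

lemma char_poly_A: "char_poly A = (\<Prod>a\<leftarrow>map jdiag [0..<n]. [:- a, 1:])"
proof -
  have "char_poly A = char_poly J"
    by (rule char_poly_similar) (use similar in \<open>auto simp: similar_mat_def\<close>)
  also have "\<dots> = (\<Prod>a\<leftarrow>diag_mat J. [:- a, 1:])"
    using jordan_matrix_upper_triangular[of _ n_as]
    by (intro char_poly_upper_triangular[OF carriers(1)]) auto
  also have "diag_mat J = map jdiag [0..<n]"
    using carriers(1) by (simp add: diag_mat_def jdiag_def)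
  finally show ?thesis .
qed

lemma order_char_poly_A: "order a (char_poly A) = card {r. r < n \<and> jdiag r = a}"
  unfolding char_poly_A order_prod_linear_factors length_filter_conv_card
  by (rule arg_cong[where f = card]) auto

lemma eigenvalue_iff_jdiag: "eigenvalue A \<mu> \<longleftrightarrow> (\<exists>r<n. jdiag r = \<mu>)"
  unfolding eigenvalue_root_char_poly[OF A_carrier] char_poly_A
  by (auto simp: poly_prod_list prod_list_zero_iff)

lemma char_matrix_J_carrier: "char_matrix J \<nu> \<in> carrier_mat n n"
  using carriers(1) by simp

lemma char_matrix_J_mult_vec_nth:
  assumes "w \<in> carrier_vec n" "s < n"
  shows "(char_matrix J \<nu> *\<^sub>v w) $ s = (jdiag s - \<nu>) * w $ s + jsup s * w $ Suc s"
proof -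
  have "char_matrix J \<nu> *\<^sub>v w = J *\<^sub>v w + ((- \<nu>) \<cdot>\<^sub>m 1\<^sub>m n) *\<^sub>v w"
    unfolding char_matrix_def using carriers(1) assms(1)
    by (simp add: add_mult_distrib_mat_vec[of _ n n])
  with assms J_mult_vec_nth[OF assms] carriers(1) show ?thesis
    by (simp add: algebra_simps)
qed

text \<open>Each application of \<open>J - \<nu>\<close> moves the support of a vector living on the
  \<open>\<nu>\<close>-blocks one row up, so \<open>(J - \<nu>)\<^sup>n\<close> annihilates it.\<close>

lemma char_matrix_J_support_shift:
  assumes "w \<in> carrier_vec n" and supp: "\<forall>s<n. w $ s \<noteq> 0 \<longrightarrow> jdiag s = \<nu> \<and> s + k < n"
  shows "\<forall>s<n. (char_matrix J \<nu> *\<^sub>v w) $ s \<noteq> 0 \<longrightarrow> jdiag s = \<nu> \<and> s + Suc k < n"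
proof (intro allI impI)
  fix s assume "s < n" and "(char_matrix J \<nu> *\<^sub>v w) $ s \<noteq> 0"
  then have "(jdiag s - \<nu>) * w $ s + jsup s * w $ Suc s \<noteq> 0"
    by (simp add: char_matrix_J_mult_vec_nth[OF assms(1)])
  moreover have "(jdiag s - \<nu>) * w $ s = 0"
    using supp \<open>s < n\<close> by auto
  ultimately have "jsup s \<noteq> 0" and "w $ Suc s \<noteq> 0"
    by auto
  with jsup_nonzero[of s] supp show "jdiag s = \<nu> \<and> s + Suc k < n"
    by auto
qed

lemma char_matrix_J_pow_support:
  assumes "w \<in> carrier_vec n" and "\<forall>s<n. w $ s \<noteq> 0 \<longrightarrow> jdiag s = \<nu> \<and> s + k < n"
  shows "\<forall>s<n. ((char_matrix J \<nu> ^\<^sub>m j) *\<^sub>v w) $ s \<noteq> 0 \<longrightarrow> jdiag s = \<nu> \<and> s + k + j < n"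
  using assms
proof (induct j arbitrary: w k)
  case 0
  then show ?case
    using carrier_matD(1)[OF char_matrix_J_carrier] by simp
next
  case (Suc j)
  note N = char_matrix_J_carrier[of \<nu>]
  have "(char_matrix J \<nu> ^\<^sub>m Suc j) *\<^sub>v w = (char_matrix J \<nu> ^\<^sub>m j) *\<^sub>v (char_matrix J \<nu> *\<^sub>v w)"
    using N Suc.prems(1) by (simp add: assoc_mult_mat_vec[of _ n n _ n])
  with Suc.hyps[OF _ char_matrix_J_support_shift[OF Suc.prems]] N Suc.prems(1) show ?case
    by simp
qed

lemma P_mult_vec_gen_eigenspace:
  assumes "z \<in> carrier_vec n" and "\<forall>s<n. z $ s \<noteq> 0 \<longrightarrow> jdiag s = \<nu>"
  shows "P *\<^sub>v z \<in> gen_eigenspace A \<nu>"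
proof -
  have "(char_matrix J \<nu> ^\<^sub>m n) *\<^sub>v z = 0\<^sub>v n"
  proof (rule eq_vecI)
    fix s assume "s < dim_vec (0\<^sub>v n :: complex vec)"
    then show "((char_matrix J \<nu> ^\<^sub>m n) *\<^sub>v z) $ s = 0\<^sub>v n $ s"
      using char_matrix_J_pow_support[OF assms(1), of \<nu> 0 n] assms(2) by auto
  qed (use carrier_matD[OF char_matrix_J_carrier] in simp)
  moreover have "char_matrix A \<nu> ^\<^sub>m n = P * (char_matrix J \<nu> ^\<^sub>m n) * Pinv"
    by (rule similar_mat_wit_pow_id[OF similar_mat_wit_char_matrix[OF similar]])
  ultimately have "(char_matrix A \<nu> ^\<^sub>m n) *\<^sub>v (P *\<^sub>v z) = P *\<^sub>v 0\<^sub>v n"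
    using carriers assms(1)
    by (simp add: assoc_mult_mat_vec[of _ n n _ n] Pinv_P_mult_vec)
  also have "P *\<^sub>v 0\<^sub>v n = 0\<^sub>v n"
    using carriers(2) by auto
  finally have "(char_matrix A \<nu> ^\<^sub>m n) *\<^sub>v (P *\<^sub>v z) = 0\<^sub>v n" .
  then show ?thesis
    using carriers A_carrier assms(1) by (simp add: gen_eigenspace_def)
qed

text \<open>Splitting \<open>P\<^sup>-\<^sup>1x\<^sub>0\<close> according to the diagonal value gives the decomposition of
  \<open>x\<^sub>0\<close> into generalized eigenvectors.\<close>

lemma nonzero_gen_component_coordinate:
  assumes "nonzero_gen_component A \<mu> x0" and "x0 \<in> carrier_vec n"
  shows "\<exists>r<n. jdiag r = \<mu> \<and> (Pinv *\<^sub>v x0) $ r \<noteq> 0"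
proof (rule ccontr)
  assume no_coordinate: "\<not> ?thesis"
  define y where "y = Pinv *\<^sub>v x0"
  define z where "z \<nu> = vec n (\<lambda>s. if jdiag s = \<nu> then y $ s else 0)" for \<nu>
  define E where "E = Collect (eigenvalue A)"
  have E: "E = jdiag ` {..<n}"
    by (auto simp: E_def eigenvalue_iff_jdiag)
  have "\<forall>\<nu>\<in>E. P *\<^sub>v z \<nu> \<in> gen_eigenspace A \<nu>"
    by (auto simp: z_def intro!: P_mult_vec_gen_eigenspace split: if_splits)
  moreover have "\<forall>i<dim_row A. (\<Sum>\<nu>\<in>E. (P *\<^sub>v z \<nu>) $ i) = x0 $ i"
  proof (intro allI impI)
    fix i assume "i < dim_row A"
    then have "i < n" using A_carrier by simp
    have "(\<Sum>\<nu>\<in>E. (P *\<^sub>v z \<nu>) $ i) = (\<Sum>\<nu>\<in>E. \<Sum>s<n. P $$ (i, s) * (if jdiag s = \<nu> then y $ s else 0))"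
      using carriers(2) \<open>i < n\<close> by (simp add: z_def scalar_prod_def atLeast0LessThan)
    also have "\<dots> = (\<Sum>s<n. P $$ (i, s) * (\<Sum>\<nu>\<in>E. if jdiag s = \<nu> then y $ s else 0))"
      by (simp add: sum.swap[of _ E] sum_distrib_left)
    also have "\<dots> = (\<Sum>s<n. P $$ (i, s) * y $ s)"
      by (intro sum.cong) (auto simp: E)
    also have "\<dots> = (P *\<^sub>v y) $ i"
      using carriers \<open>i < n\<close> assms(2) by (simp add: y_def scalar_prod_def atLeast0LessThan)
    also have "\<dots> = x0 $ i"
      using assms(2) by (simp add: y_def P_Pinv_mult_vec)
    finally show "(\<Sum>\<nu>\<in>E. (P *\<^sub>v z \<nu>) $ i) = x0 $ i" .
  qed
  ultimately have "P *\<^sub>v z \<mu> \<noteq> 0\<^sub>v (dim_row A)"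
    using assms(1) by (auto simp: nonzero_gen_component_def E_def)
  moreover have "z \<mu> = 0\<^sub>v n"
    using no_coordinate by (auto simp: z_def y_def)
  ultimately show False
    using carriers(2) A_carrier by auto
qed

end

locale simple_jordan_frame = jordan_frame +
  fixes l :: complex and p :: nat
  assumes p_lt: "p < n" and jdiag_eq_iff: "r < n \<Longrightarrow> jdiag r = l \<longleftrightarrow> r = p"
begin

lemma jsup_p: "jsup p = 0"
  using jsup_nonzero[of p] jdiag_eq_iff[of p] jdiag_eq_iff[of "Suc p"] p_lt by auto

text \<open>Downward induction along the Jordan chains: \<open>jsup r \<noteq> 0\<close> puts \<open>Suc r\<close> into the
  block of \<open>r\<close>, which is not the one-by-one block of \<open>p\<close>.\<close>

lemma off_dominant_induct:
  assumes step: "\<And>r. r < n \<Longrightarrow> r \<noteq> p \<Longrightarrow> (jsup r \<noteq> 0 \<Longrightarrow> R (Suc r)) \<Longrightarrow> R r"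
  shows "r < n \<Longrightarrow> r \<noteq> p \<Longrightarrow> R r"
proof (induct "n - r" arbitrary: r)
  case 0
  then show ?case by simp
next
  case (Suc k)
  show ?case
  proof (rule step[OF Suc.prems])
    assume "jsup r \<noteq> 0"
    with jsup_nonzero[of r] jdiag_eq_iff[of r] jdiag_eq_iff[of "Suc r"] Suc.prems
    have "Suc r < n" "Suc r \<noteq> p"
      by auto
    with Suc.hyps(1)[of "Suc r"] Suc.hyps(2) show "R (Suc r)"
      by simp
  qed
qed

lemma J_eigenvector_support:
  assumes "v \<in> carrier_vec n" "J *\<^sub>v v = l \<cdot>\<^sub>v v" "r < n" "r \<noteq> p"
  shows "v $ r = 0"
proof (rule off_dominant_induct[where R = "\<lambda>r. v $ r = 0", OF _ assms(3,4)])
  fix r assume r: "r < n" "r \<noteq> p" and chain: "jsup r \<noteq> 0 \<Longrightarrow> v $ Suc r = 0"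
  have "jdiag r * v $ r + jsup r * v $ Suc r = l * v $ r"
    using J_mult_vec_nth[OF assms(1) r(1)] assms(2) r(1) carrier_vecD[OF assms(1)] by simp
  moreover have "jsup r * v $ Suc r = 0"
    using chain by (cases "jsup r = 0") auto
  ultimately have "jdiag r * v $ r = l * v $ r"
    by (simp only: add_0_right)
  then have "(jdiag r - l) * v $ r = 0"
    by (simp add: left_diff_distrib)
  with jdiag_eq_iff[OF r(1)] r(2) show "v $ r = 0"
    by simp
qed

lemma eigenvector_coordinates:
  assumes "u \<in> carrier_vec n" "A *\<^sub>v u = l \<cdot>\<^sub>v u" "i < n"
  shows "u $ i = P $$ (i, p) * (Pinv *\<^sub>v u) $ p"
proof -
  define v where "v = Pinv *\<^sub>v u"
  have v: "v \<in> carrier_vec n"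
    using carriers(3) assms(1) by (simp add: v_def)
  have "J *\<^sub>v v = l \<cdot>\<^sub>v v"
    using Pinv_A_mult_vec[OF assms(1)] assms(2) carriers(3) assms(1)
    by (simp add: v_def mult_mat_vec)
  then have "v $ s = 0" if "s < n" "s \<noteq> p" for s
    using J_eigenvector_support[OF v _ that] by simp
  then have "(P *\<^sub>v v) $ i = P $$ (i, p) * v $ p"
    using carriers(2) v assms(3) p_lt
    by (simp add: scalar_prod_def atLeast0LessThan sum.remove[of "{..<n}" p])
  then show ?thesis
    using P_Pinv_mult_vec[OF assms(1)] by (simp add: v_def)
qed

end

locale jordan_flow = simple_jordan_frame +
  fixes X :: "real \<Rightarrow> complex vec" and \<phi> :: "real \<Rightarrow> complex" and K :: real
  assumes X_carrier: "\<And>t. X t \<in> carrier_vec n"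
    and ode: "\<And>t i. t \<ge> 0 \<Longrightarrow> i < n \<Longrightarrow>
      ((\<lambda>s. X s $ i) has_vector_derivative (A *\<^sub>v X t - \<phi> t \<cdot>\<^sub>v X t) $ i) (at t within {0..})"
    and Re_\<phi>_le: "\<And>t. t \<ge> 0 \<Longrightarrow> Re (\<phi> t) \<le> K"
    and dominant: "\<And>r. r < n \<Longrightarrow> r \<noteq> p \<Longrightarrow> Re (jdiag r) < Re l"
    and start: "(Pinv *\<^sub>v X 0) $ p \<noteq> 0"
begin

definition coord :: "real \<Rightarrow> nat \<Rightarrow> complex" where
  "coord t r = (Pinv *\<^sub>v X t) $ r"

definition ratio :: "real \<Rightarrow> nat \<Rightarrow> complex" where
  "ratio t r = coord t r / coord t p"

lemma coord_ode:
  assumes "t \<ge> 0" "r < n"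
  shows "((\<lambda>s. coord s r) has_vector_derivative
      jdiag r * coord t r + jsup r * coord t (Suc r) - \<phi> t * coord t r) (at t within {0..})"
proof -
  have "((\<lambda>s. (Pinv *\<^sub>v X s) $ r) has_vector_derivative
      (Pinv *\<^sub>v (A *\<^sub>v X t - \<phi> t \<cdot>\<^sub>v X t)) $ r) (at t within {0..})"
    by (rule has_vector_derivative_mult_mat_vec[OF carriers(3) X_carrier _ ode[OF assms(1)] assms(2)])
      (use A_carrier X_carrier in auto)
  moreover have "Pinv *\<^sub>v (A *\<^sub>v X t - \<phi> t \<cdot>\<^sub>v X t) = J *\<^sub>v (Pinv *\<^sub>v X t) - \<phi> t \<cdot>\<^sub>v (Pinv *\<^sub>v X t)"
    using carriers A_carrier X_carrier[of t]
    by (simp add: mult_minus_distrib_mat_vec[of _ n n] mult_mat_vec Pinv_A_mult_vec)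
  ultimately show ?thesis
    using J_mult_vec_nth[of "Pinv *\<^sub>v X t" r] carriers(1,3) X_carrier[of t] assms(2)
    by (simp add: coord_def)
qed

lemma coord_p_nonzero: "t \<ge> 0 \<Longrightarrow> coord t p \<noteq> 0"
proof (rule linear_ode_nonvanishing[where g = "\<lambda>t. l - \<phi> t" and K = "K - Re l"])
  fix s :: real assume "s \<ge> 0"
  show "((\<lambda>t. coord t p) has_vector_derivative (l - \<phi> s) * coord s p) (at s within {0..})"
    using coord_ode[OF \<open>s \<ge> 0\<close> p_lt] jsup_p jdiag_eq_iff[OF p_lt]
    by (simp add: left_diff_distrib)
  show "Re (l - \<phi> s) \<ge> - (K - Re l)"
    using Re_\<phi>_le[OF \<open>s \<ge> 0\<close>] by simp
qed (use start in \<open>simp_all add: coord_def\<close>)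

lemma ratio_ode:
  assumes "t > 0" "r < n"
  shows "((\<lambda>s. ratio s r) has_vector_derivative (jdiag r - l) * ratio t r + jsup r * ratio t (Suc r))
      (at t)"
proof -
  have at_eq: "at t within {0..} = at t"
    by (rule at_within_open_subset[of t "{0<..}"]) (use assms(1) in auto)
  have "coord t p \<noteq> 0"
    using coord_p_nonzero assms(1) by simp
  from has_vector_derivative_quotient[OF coord_ode[OF _ assms(2), of t, unfolded at_eq]
      coord_ode[OF _ p_lt, of t, unfolded at_eq] this] assms(1)
  have "((\<lambda>s. coord s r / coord s p) has_vector_derivative
      ((jdiag r * coord t r + jsup r * coord t (Suc r) - \<phi> t * coord t r) * coord t p
        - coord t r * ((l - \<phi> t) * coord t p)) / (coord t p)\<^sup>2) (at t)"
    using jsup_p jdiag_eq_iff[OF p_lt] by (simp add: left_diff_distrib)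
  moreover have "((jdiag r * coord t r + jsup r * coord t (Suc r) - \<phi> t * coord t r) * coord t p
        - coord t r * ((l - \<phi> t) * coord t p)) / (coord t p)\<^sup>2
      = (jdiag r - l) * ratio t r + jsup r * ratio t (Suc r)"
    using \<open>coord t p \<noteq> 0\<close> by (simp add: ratio_def field_simps power2_eq_square)
  ultimately show ?thesis
    unfolding ratio_def by simp
qed

lemma ratio_tendsto_zero:
  assumes "r < n" "r \<noteq> p"
  shows "((\<lambda>t. ratio t r) \<longlongrightarrow> 0) at_top"
proof (rule off_dominant_induct[where R = "\<lambda>r. ((\<lambda>t. ratio t r) \<longlongrightarrow> 0) at_top", OF _ assms])
  fix r assume r: "r < n" "r \<noteq> p"
    and chain: "jsup r \<noteq> 0 \<Longrightarrow> ((\<lambda>t. ratio t (Suc r)) \<longlongrightarrow> 0) at_top"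
  have "((\<lambda>t. jsup r * ratio t (Suc r)) \<longlongrightarrow> 0) at_top"
    using chain by (cases "jsup r = 0") (auto intro: tendsto_mult_right_zero)
  moreover have "Re (jdiag r - l) < 0"
    using dominant[OF r] by simp
  ultimately show "((\<lambda>t. ratio t r) \<longlongrightarrow> 0) at_top"
    using forced_linear_ode_tendsto_zero[where a = "jdiag r - l" and T = 0
        and f = "\<lambda>t. jsup r * ratio t (Suc r)"] ratio_ode[OF _ r(1)]
    by simp
qed

lemma X_expansion:
  assumes "t \<ge> 0" "i < n"
  shows "X t $ i = coord t p * (P $$ (i, p) + (\<Sum>r\<in>{..<n} - {p}. P $$ (i, r) * ratio t r))"
proof -
  have "coord t p \<noteq> 0"
    using coord_p_nonzero assms(1) by simp
  have "X t $ i = (P *\<^sub>v (Pinv *\<^sub>v X t)) $ i"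
    using P_Pinv_mult_vec[OF X_carrier] by simp
  also have "\<dots> = (\<Sum>r<n. P $$ (i, r) * (coord t p * ratio t r))"
    using carriers(2,3) X_carrier[of t] assms(2) \<open>coord t p \<noteq> 0\<close>
    by (simp add: scalar_prod_def atLeast0LessThan coord_def ratio_def)
  also have "\<dots> = coord t p * (\<Sum>r<n. P $$ (i, r) * ratio t r)"
    by (simp add: sum_distrib_left algebra_simps)
  also have "(\<Sum>r<n. P $$ (i, r) * ratio t r)
      = P $$ (i, p) * ratio t p + (\<Sum>r\<in>{..<n} - {p}. P $$ (i, r) * ratio t r)"
    using p_lt by (simp add: sum.remove)
  finally show ?thesis
    using \<open>coord t p \<noteq> 0\<close> by (simp add: ratio_def)
qed

lemma tendsto_eigenvector:
  assumes u: "u \<in> carrier_vec n" "A *\<^sub>v u = l \<cdot>\<^sub>v u" "(\<Sum>i<n. u $ i) = 1"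
    and normalized: "\<And>t. t \<ge> 0 \<Longrightarrow> (\<Sum>i<n. X t $ i) = 1"
    and "i < n"
  shows "((\<lambda>t. X t $ i) \<longlongrightarrow> u $ i) at_top"
proof -
  define v where "v = (Pinv *\<^sub>v u) $ p"
  have u_eq: "u $ j = P $$ (j, p) * v" if "j < n" for j
    using eigenvector_coordinates[OF u(1,2) that] by (simp add: v_def)
  have "v \<noteq> 0"
    using u(3) u_eq by auto
  define S where "S t j = v * (\<Sum>r\<in>{..<n} - {p}. P $$ (j, r) * ratio t r)" for t j
  show ?thesis
  proof (rule tendsto_normalized_perturbation[where c = "\<lambda>t. coord t p / v" and s = S])
    show "\<forall>\<^sub>F t in at_top. \<forall>j<n. X t $ j = coord t p / v * (u $ j + S t j)"
      using eventually_ge_at_top[of 0]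
      by eventually_elim (use \<open>v \<noteq> 0\<close> in \<open>simp add: X_expansion u_eq S_def field_simps\<close>)
    show "\<forall>\<^sub>F t in at_top. (\<Sum>j<n. X t $ j) = 1"
      using eventually_ge_at_top[of 0] by eventually_elim (rule normalized)
    show "((\<lambda>t. S t j) \<longlongrightarrow> 0) at_top" if "j < n" for j
      unfolding S_def by (intro tendsto_mult_right_zero tendsto_null_sum tendsto_mult_right_zero
          ratio_tendsto_zero) auto
  qed (use u(3) \<open>i < n\<close> in auto)
qed

end

theorem dominant_eigenvector_attracts:
  fixes A :: "complex mat" and X :: "real \<Rightarrow> complex vec" and \<phi> :: "real \<Rightarrow> complex"
  assumes A: "A \<in> carrier_mat n n"
    and dominant: "\<And>\<mu>. eigenvalue A \<mu> \<Longrightarrow> \<mu> \<noteq> l \<Longrightarrow> Re \<mu> < Re l"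
    and simple: "order l (char_poly A) = 1"
    and u: "u \<in> carrier_vec n" "A *\<^sub>v u = l \<cdot>\<^sub>v u" "(\<Sum>i<n. u $ i) = 1"
    and X_carrier: "\<And>t. X t \<in> carrier_vec n"
    and ode: "\<And>t i. t \<ge> 0 \<Longrightarrow> i < n \<Longrightarrow>
      ((\<lambda>s. X s $ i) has_vector_derivative (A *\<^sub>v X t - \<phi> t \<cdot>\<^sub>v X t) $ i) (at t within {0..})"
    and Re_\<phi>_le: "\<And>t. t \<ge> 0 \<Longrightarrow> Re (\<phi> t) \<le> K"
    and normalized: "\<And>t. t \<ge> 0 \<Longrightarrow> (\<Sum>i<n. X t $ i) = 1"
    and init: "nonzero_gen_component A l (X 0)"
    and "i < n"
  shows "((\<lambda>t. X t $ i) \<longlongrightarrow> u $ i) at_top"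
proof -
  obtain as where "char_poly A = (\<Prod>a\<leftarrow>as. [:- a, 1:])"
    using char_poly_factorized[OF A] by blast
  then obtain n_as where "jordan_nf A n_as"
    using jordan_nf_exists[OF A] by blast
  then obtain P Pinv where "similar_mat_wit A (jordan_matrix n_as) P Pinv"
    by (auto simp: jordan_nf_def similar_mat_def)
  then interpret jordan_frame A n n_as P Pinv
    using A by unfold_locales
  obtain p where p: "{r. r < n \<and> jdiag r = l} = {p}"
    using simple order_char_poly_A by (metis card_1_singletonE)
  then interpret simple_jordan_frame A n n_as P Pinv l p
    by unfold_locales auto
  have "(Pinv *\<^sub>v X 0) $ p \<noteq> 0"
    using nonzero_gen_component_coordinate[OF init X_carrier] jdiag_eq_iff by blast
  then interpret jordan_flow A n n_as P Pinv l p X \<phi> K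
    using X_carrier ode Re_\<phi>_le dominant eigenvalue_iff_jdiag jdiag_eq_iff
    by unfold_locales blast+
  show ?thesis
    by (rule tendsto_eigenvector[OF u normalized \<open>i < n\<close>])
qed

lemma weighted_sum_le_sum_abs_on_simplex:
  fixes x a :: "nat \<Rightarrow> real"
  assumes "\<forall>i\<le>m. x i \<ge> 0" and "(\<Sum>i\<le>m. x i) = 1"
  shows "(\<Sum>j\<le>m. a j * x j) \<le> (\<Sum>j\<le>m. \<bar>a j\<bar>)"
proof (rule sum_mono)
  fix j assume "j \<in> {..m}"
  then have "x j \<le> 1" and "x j \<ge> 0"
    using member_le_sum[of j "{..m}" x] assms by auto
  then have "\<bar>a j\<bar> * x j \<le> \<bar>a j\<bar>"
    by (simp add: mult_left_le)
  moreover have "a j * x j \<le> \<bar>a j\<bar> * x j"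
    using \<open>x j \<ge> 0\<close> by (simp add: mult_right_mono)
  ultimately show "a j * x j \<le> \<bar>a j\<bar>"
    by linarith
qed

lemma frequency_equation_tendsto_eigenvector:
  fixes Q :: "real mat" and u :: "real vec" and x :: "real \<Rightarrow> nat \<Rightarrow> real" and lam1 :: real
  assumes Q: "Q \<in> carrier_mat (m+1) (m+1)"
    and dominant: "\<And>lam. eigenvalue (map_mat complex_of_real Q) lam \<Longrightarrow>
      lam \<noteq> complex_of_real lam1 \<Longrightarrow> Re lam < lam1"
    and simple: "order (complex_of_real lam1) (char_poly (map_mat complex_of_real Q)) = 1"
    and u_dim: "u \<in> carrier_vec (m+1)"
    and u_eig: "Q *\<^sub>v u = lam1 \<cdot>\<^sub>v u"
    and u_norm: "(\<Sum>i\<le>m. u $ i) = 1"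
    and ode: "\<And>t i. t \<ge> 0 \<Longrightarrow> i \<le> m \<Longrightarrow>
      ((\<lambda>s. x s i) has_real_derivative
        ((\<Sum>j\<le>m. Q $$ (i,j) * x t j) - x t i * (\<Sum>k\<le>m. \<Sum>j\<le>m. Q $$ (k,j) * x t j)))
      (at t within {0..})"
    and simplex: "\<And>t. t \<ge> 0 \<Longrightarrow> (\<forall>i\<le>m. x t i \<ge> 0) \<and> (\<Sum>i\<le>m. x t i) = 1"
    and init: "nonzero_gen_component (map_mat complex_of_real Q) (complex_of_real lam1)
      (vec (m+1) (\<lambda>i. complex_of_real (x 0 i)))"
  shows "\<forall>i\<le>m. ((\<lambda>t. x t i) \<longlongrightarrow> u $ i) at_top"
proof (intro allI impI)
  fix i assume "i \<le> m"
  define A where "A = map_mat complex_of_real Q"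
  define X where "X t = vec (m+1) (\<lambda>j. complex_of_real (x t j))" for t
  define \<phi> where "\<phi> t = (\<Sum>k\<le>m. \<Sum>j\<le>m. Q $$ (k,j) * x t j)" for t
  define uc where "uc = map_vec complex_of_real u"
  have A: "A \<in> carrier_mat (m+1) (m+1)"
    using Q by (simp add: A_def)
  have "A *\<^sub>v uc = map_vec complex_of_real (Q *\<^sub>v u)"
    unfolding A_def uc_def by (rule of_real_hom.mult_mat_vec_hom[OF Q u_dim, symmetric])
  also have "\<dots> = complex_of_real lam1 \<cdot>\<^sub>v uc"
    unfolding u_eig uc_def by (rule of_real_hom.vec_hom_smult)
  finally have "A *\<^sub>v uc = complex_of_real lam1 \<cdot>\<^sub>v uc" .
  moreover have "(\<Sum>i<m+1. uc $ i) = 1"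
    using u_dim u_norm by (simp add: uc_def lessThan_Suc_atMost flip: of_real_sum)
  moreover have "((\<lambda>s. X s $ j) has_vector_derivative
      (A *\<^sub>v X t - complex_of_real (\<phi> t) \<cdot>\<^sub>v X t) $ j) (at t within {0..})"
    if "t \<ge> 0" "j < m+1" for t j
  proof -
    have "(A *\<^sub>v X t - complex_of_real (\<phi> t) \<cdot>\<^sub>v X t) $ j
        = complex_of_real ((\<Sum>k\<le>m. Q $$ (j,k) * x t k) - x t j * \<phi> t)"
      using Q that by (simp add: A_def X_def scalar_prod_def lessThan_Suc_atMost atLeast0LessThan)
    moreover have "(\<lambda>s. X s $ j) = (\<lambda>s. complex_of_real (x s j))"
      using that by (simp add: X_def)
    ultimately show ?thesis
      using has_vector_derivative_of_real[OF ode[of t j]] that by (simp add: \<phi>_def)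
  qed
  moreover have "Re (complex_of_real (\<phi> t)) \<le> (\<Sum>k\<le>m. \<Sum>j\<le>m. \<bar>Q $$ (k,j)\<bar>)" if "t \<ge> 0" for t
    unfolding \<phi>_def Re_complex_of_real
    using simplex[OF that] by (intro sum_mono weighted_sum_le_sum_abs_on_simplex) auto
  moreover have "(\<Sum>i<m+1. X t $ i) = 1" if "t \<ge> 0" for t
    using simplex[OF that] by (simp add: X_def lessThan_Suc_atMost flip: of_real_sum)
  ultimately have "((\<lambda>t. X t $ i) \<longlongrightarrow> uc $ i) at_top"
    using \<open>i \<le> m\<close> u_dim init dominant simple
    by (intro dominant_eigenvector_attracts[OF A, of "complex_of_real lam1"])
      (auto simp: A_def X_def uc_def)
  from tendsto_Re[OF this] show "((\<lambda>t. x t i) \<longlongrightarrow> u $ i) at_top"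
    using \<open>i \<le> m\<close> u_dim by (simp add: X_def uc_def)
qed

theorem mainTheorem6:
  fixes m :: nat
    and alpha :: "nat \<Rightarrow> nat \<Rightarrow> real" and alphad beta :: "nat \<Rightarrow> real"
    and lam1 :: real and u :: "real vec" and x :: "real \<Rightarrow> nat \<Rightarrow> real"
  defines "Q \<equiv> Q_mat m alpha alphad beta"
  assumes m: "m \<ge> 1"
    and nonneg: "\<And>i j. alpha i j \<ge> 0" "\<And>i. alphad i \<ge> 0" "\<And>j. beta j \<ge> 0"
    and pf_eig: "eigenvalue (map_mat complex_of_real Q) (complex_of_real lam1)"
    and pf_dom: "\<And>lam. eigenvalue (map_mat complex_of_real Q) lam \<Longrightarrow>
                   lam \<noteq> complex_of_real lam1 \<Longrightarrow> Re lam < lam1"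
    and simple: "order (complex_of_real lam1) (char_poly (map_mat complex_of_real Q)) = 1"
    and u_dim: "u \<in> carrier_vec (m+1)"
    and u_nonneg: "\<And>i. i \<le> m \<Longrightarrow> u $ i \<ge> 0"
    and u_eig: "Q *\<^sub>v u = lam1 \<cdot>\<^sub>v u"
    and u_norm: "(\<Sum>i\<le>m. u $ i) = 1"
    and ode: "\<And>t i. t \<ge> 0 \<Longrightarrow> i \<le> m \<Longrightarrow>
       ((\<lambda>s. x s i) has_real_derivative
          ((\<Sum>j\<le>m. Q $$ (i,j) * x t j) - x t i * (\<Sum>k\<le>m. \<Sum>j\<le>m. Q $$ (k,j) * x t j)))
       (at t within {0..})"
    and simplex: "\<And>t. t \<ge> 0 \<Longrightarrow> (\<forall>i\<le>m. x t i \<ge> 0) \<and> (\<Sum>i\<le>m. x t i) = 1"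
    and init: "nonzero_gen_component (map_mat complex_of_real Q) (complex_of_real lam1)
                 (vec (m+1) (\<lambda>i. complex_of_real (x 0 i)))"
  shows "\<forall>i\<le>m. ((\<lambda>t. x t i) \<longlongrightarrow> u $ i) at_top"
proof -
  have "Q \<in> carrier_mat (m+1) (m+1)"
    by (simp add: Q_def Q_mat_def)
  from frequency_equation_tendsto_eigenvector[OF this pf_dom simple u_dim u_eig u_norm ode simplex init]
  show ?thesis .
qed

end
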